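(* Let $P,R\in\mathrm{Sym}(n,\mathbb{R})$, $Q\in\mathrm{Mat}(n,\mathbb{R})$ with $\langle Pv,v\rangle\ge C_1|v|^2$ for some $C_1>0$ and all $v$. For $\lambda\in\mathbb{R}$ let $B_\lambda=\begin{bmatrix}P^{-1}&-P^{-1}Q\\-Q^TP^{-1}&Q^TP^{-1}Q-R-\lambda I_n\end{bmatrix}$ and $J=\begin{bmatrix}0&-I_n\\ I_n&0\end{bmatrix}$. If $JB_0$ is hyperbolic, then $JB_\lambda$ is hyperbolic for every $\lambda\ge0$.
   Context: A real matrix is hyperbolic if it has no eigenvalue on the imaginary axis. *)

theory Defs
  imports "Jordan_Normal_Form.Jordan_Normal_Form" "Jordan_Normal_Form.Gauss_Jordan_Elimination"
begin

definition hyperbolic :: "real mat \<Rightarrow> bool" where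
  "hyperbolic A \<longleftrightarrow> \<not> (\<exists>\<mu>::complex. Re \<mu> = 0 \<and> eigenvalue (map_mat complex_of_real A) \<mu>)"

definition J_mat :: "nat \<Rightarrow> real mat" where
  "J_mat n = four_block_mat (0\<^sub>m n n) (- 1\<^sub>m n) (1\<^sub>m n) (0\<^sub>m n n)"

definition B_mat :: "nat \<Rightarrow> real mat \<Rightarrow> real mat \<Rightarrow> real mat \<Rightarrow> real \<Rightarrow> real mat" where
  "B_mat n P Q R l = (let Pi = the (mat_inverse P) in
     four_block_mat Pi (- (Pi * Q))
                    (- (transpose_mat Q * Pi)) (transpose_mat Q * Pi * Q - R - l \<cdot>\<^sub>m 1\<^sub>m n))"

end

theory Submission
  imports Defs
begin

text \<open>An eigenvector \<open>(x, y)\<close> of \<open>J B\<^sub>\<lambda>\<close> for an imaginary eigenvalue \<open>i\<omega>\<close> satisfies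
  \<open>x = Q y + i\<omega> P y\<close>, and eliminating \<open>x\<close> leaves \<open>H(\<omega>) y = -\<lambda> y\<close> with the Hermitian matrix
  \<open>H(\<omega>) = \<omega>\<^sup>2 P + R + i\<omega> (Q\<^sup>T - Q)\<close>; conversely every such \<open>y \<noteq> 0\<close> gives an eigenvector.
  Hyperbolicity of \<open>J B\<^sub>0\<close> therefore says that \<open>H(\<omega>)\<close> is nonsingular for every real \<open>\<omega>\<close>.
  As \<open>P\<close> is positive definite, so is \<open>H(\<omega>)\<close> for large \<open>\<omega>\<close>. The set of \<open>\<omega>\<close> where
  \<open>H(\<omega>)\<close> is positive definite is open, and so is the set where it is not positive
  semidefinite; by nonsingularity these two sets cover \<open>\<real>\<close>, so by connectedness \<open>H(\<omega>)\<close> is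
  positive definite for all \<open>\<omega>\<close>, and \<open>-\<lambda> \<le> 0\<close> cannot be one of its eigenvalues.\<close>

section \<open>Vectors and quadratic forms\<close>

lemma smult_mat_mult_mat_vec:
  assumes "A \<in> carrier_mat nr nc" and "v \<in> carrier_vec nc"
  shows "(k \<cdot>\<^sub>m A) *\<^sub>v v = k \<cdot>\<^sub>v (A *\<^sub>v v)"
  using assms by (intro eq_vecI) (auto simp: scalar_prod_def sum_distrib_left mult.assoc)

lemma transpose_smult_mat: "transpose_mat (k \<cdot>\<^sub>m A) = k \<cdot>\<^sub>m transpose_mat A"
  by (intro eq_matI) auto

lemma smult_append_vec: "c \<cdot>\<^sub>v (a @\<^sub>v b) = (c \<cdot>\<^sub>v a) @\<^sub>v (c \<cdot>\<^sub>v b)"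
  by (auto simp: vec_eq_iff)

lemma zero_append_vec_zero: "0\<^sub>v n @\<^sub>v 0\<^sub>v k = 0\<^sub>v (n + k)"
  by (auto simp: vec_eq_iff)

lemma vec_eq_iff_componentwise:
  assumes "a \<in> carrier_vec n" "b \<in> carrier_vec n" "c \<in> carrier_vec n" "d \<in> carrier_vec n"
    and "\<And>i. i < n \<Longrightarrow> a $ i = b $ i \<longleftrightarrow> c $ i = d $ i"
  shows "a = b \<longleftrightarrow> c = d"
  using assms by (auto simp: vec_eq_iff)

lemma append_vec_eq_0_iff:
  assumes "x \<in> carrier_vec n" and "y \<in> carrier_vec k"
  shows "x @\<^sub>v y = 0\<^sub>v (n + k) \<longleftrightarrow> x = 0\<^sub>v n \<and> y = 0\<^sub>v k"
  using assms by (metis append_vec_eq zero_append_vec_zero zero_carrier_vec)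

definition mat_abs_sum :: "real mat \<Rightarrow> real" where
  "mat_abs_sum M = (\<Sum>i<dim_row M. \<Sum>j<dim_col M. \<bar>M $$ (i, j)\<bar>)"

definition pos_semidef :: "nat \<Rightarrow> real mat \<Rightarrow> bool" where
  "pos_semidef m N \<longleftrightarrow> (\<forall>z \<in> carrier_vec m. 0 \<le> z \<bullet> (N *\<^sub>v z))"

definition coercive :: "nat \<Rightarrow> real mat \<Rightarrow> bool" where
  "coercive m N \<longleftrightarrow> (\<exists>c > 0. \<forall>z \<in> carrier_vec m. c * (z \<bullet> z) \<le> z \<bullet> (N *\<^sub>v z))"

lemma mat_abs_sum_nonneg: "0 \<le> mat_abs_sum M"
  unfolding mat_abs_sum_def by (intro sum_nonneg) auto

lemma scalar_prod_self_nonneg: "0 \<le> (v :: real vec) \<bullet> v"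
  using conjugate_square_ge_0_vec[of v] by simp

lemma scalar_prod_self_eq_0_iff: "(v :: real vec) \<in> carrier_vec n \<Longrightarrow> v \<bullet> v = 0 \<longleftrightarrow> v = 0\<^sub>v n"
  using conjugate_square_eq_0_vec[of v n] by simp

lemma abs_index_le_sqrt_scalar_prod_self:
  assumes "i < dim_vec (v :: real vec)"
  shows "\<bar>v $ i\<bar> \<le> sqrt (v \<bullet> v)"
proof -
  have "(v $ i)\<^sup>2 \<le> (\<Sum>j \<in> {0..<dim_vec v}. v $ j * v $ j)"
    unfolding power2_eq_square using assms by (intro member_le_sum) auto
  then show ?thesis
    unfolding scalar_prod_def by (simp add: real_le_rsqrt)
qed

lemma abs_scalar_prod_mult_mat_vec_le:
  assumes M: "M \<in> carrier_mat m k" and a: "a \<in> carrier_vec m" and b: "b \<in> carrier_vec k"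
  shows "\<bar>a \<bullet> (M *\<^sub>v b)\<bar> \<le> mat_abs_sum M * sqrt (a \<bullet> a) * sqrt (b \<bullet> b)"
proof -
  have "a \<bullet> (M *\<^sub>v b) = (\<Sum>i<m. \<Sum>j<k. M $$ (i, j) * (a $ i * b $ j))"
    using M a b
    by (auto simp: scalar_prod_def row_def atLeast0LessThan sum_distrib_left ac_simps
        intro!: sum.cong)
  also have "\<bar>\<dots>\<bar> \<le> (\<Sum>i<m. \<Sum>j<k. \<bar>M $$ (i, j) * (a $ i * b $ j)\<bar>)"
    by (rule order_trans[OF sum_abs sum_mono[OF sum_abs]])
  also have "\<dots> \<le> (\<Sum>i<m. \<Sum>j<k. \<bar>M $$ (i, j)\<bar> * (sqrt (a \<bullet> a) * sqrt (b \<bullet> b)))"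
    unfolding abs_mult using a b
    by (intro sum_mono mult_left_mono mult_mono abs_index_le_sqrt_scalar_prod_self)
      (auto simp: scalar_prod_self_nonneg)
  also have "\<dots> = mat_abs_sum M * sqrt (a \<bullet> a) * sqrt (b \<bullet> b)"
    using M by (simp add: mat_abs_sum_def sum_distrib_right mult.assoc)
  finally show ?thesis .
qed

lemma abs_quadratic_form_le:
  assumes "M \<in> carrier_mat m m" and "a \<in> carrier_vec m"
  shows "\<bar>a \<bullet> (M *\<^sub>v a)\<bar> \<le> mat_abs_sum M * (a \<bullet> a)"
  using abs_scalar_prod_mult_mat_vec_le[OF assms assms(2)] scalar_prod_self_nonneg[of a]
  by (simp add: mult.assoc)

lemma mult_mat_vec_square_le:
  assumes M: "M \<in> carrier_mat m k" and a: "a \<in> carrier_vec k"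
  shows "(M *\<^sub>v a) \<bullet> (M *\<^sub>v a) \<le> (mat_abs_sum M)\<^sup>2 * (a \<bullet> a)"
proof -
  define r where "r = sqrt ((M *\<^sub>v a) \<bullet> (M *\<^sub>v a))"
  have "0 \<le> r"
    by (simp add: r_def scalar_prod_self_nonneg)
  have "r\<^sup>2 \<le> mat_abs_sum M * r * sqrt (a \<bullet> a)"
    using abs_scalar_prod_mult_mat_vec_le[OF M mult_mat_vec_carrier[OF M a] a]
    unfolding r_def by (simp add: scalar_prod_self_nonneg)
  then have "r * r \<le> r * (mat_abs_sum M * sqrt (a \<bullet> a))"
    by (simp add: power2_eq_square ac_simps)
  then have "r \<le> mat_abs_sum M * sqrt (a \<bullet> a)"
    using \<open>0 \<le> r\<close> mat_abs_sum_nonneg[of M]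
    by (cases "r = 0") (auto simp: mult_le_cancel_left scalar_prod_self_nonneg)
  then have "r\<^sup>2 \<le> (mat_abs_sum M * sqrt (a \<bullet> a))\<^sup>2"
    using \<open>0 \<le> r\<close> by (rule power_mono)
  then show ?thesis
    using scalar_prod_self_nonneg by (simp add: r_def power_mult_distrib)
qed

lemma mat_inverse_exists:
  assumes "(A :: 'a :: field mat) \<in> carrier_mat n n" and "det A \<noteq> 0"
  obtains B where "mat_inverse A = Some B"
  using mat_inverse(1)[OF assms(1)] det_non_zero_imp_unit[OF assms] by fastforce

lemma symmetric_scalar_prod_swap:
  assumes N: "(N :: real mat) \<in> carrier_mat m m" and "transpose_mat N = N"
    and a: "a \<in> carrier_vec m" and b: "b \<in> carrier_vec m"
  shows "a \<bullet> (N *\<^sub>v b) = b \<bullet> (N *\<^sub>v a)"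
  using transpose_vec_mult_scalar[OF N b a] comm_scalar_prod[OF mult_mat_vec_carrier[OF N a] b]
    assms(2)
  by simp

lemma symmetric_quadratic_form_add_smult:
  assumes N: "(N :: real mat) \<in> carrier_mat m m" and "transpose_mat N = N"
    and a: "a \<in> carrier_vec m" and b: "b \<in> carrier_vec m"
  shows "(a + t \<cdot>\<^sub>v b) \<bullet> (N *\<^sub>v (a + t \<cdot>\<^sub>v b))
    = a \<bullet> (N *\<^sub>v a) + 2 * t * (b \<bullet> (N *\<^sub>v a)) + t\<^sup>2 * (b \<bullet> (N *\<^sub>v b))"
proof -
  have "N *\<^sub>v (a + t \<cdot>\<^sub>v b) = N *\<^sub>v a + t \<cdot>\<^sub>v (N *\<^sub>v b)"
    using N a b by (simp add: mult_add_distrib_mat_vec mult_mat_vec)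
  then show ?thesis
    using N a b symmetric_scalar_prod_swap[OF assms]
    by (simp add: add_scalar_prod_distrib[of _ m] scalar_prod_add_distrib[of _ m] power2_eq_square
        algebra_simps)
qed

text \<open>For \<open>0 \<le> N \<le> \<kappa> I\<close> one has \<open>N\<^sup>2 \<le> \<kappa> N\<close>; here this is obtained by testing
  positivity of \<open>N\<close> on \<open>z - N z / (\<kappa> + 1)\<close>.\<close>

lemma pos_semidef_mult_vec_square_le:
  assumes N: "(N :: real mat) \<in> carrier_mat m m" and sym: "transpose_mat N = N"
    and psd: "pos_semidef m N" and z: "z \<in> carrier_vec m"
  shows "(N *\<^sub>v z) \<bullet> (N *\<^sub>v z) \<le> (mat_abs_sum N + 1) * (z \<bullet> (N *\<^sub>v z))"
proof -
  define \<kappa> where "\<kappa> = mat_abs_sum N"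
  define s where "s = 1 / (\<kappa> + 1)"
  define w where "w = N *\<^sub>v z"
  have w: "w \<in> carrier_vec m"
    using N z by (simp add: w_def)
  have \<kappa>: "0 \<le> \<kappa>"
    by (simp add: \<kappa>_def mat_abs_sum_nonneg)
  then have s: "0 < s" "s * \<kappa> \<le> 1"
    by (simp_all add: s_def field_simps)
  have "0 \<le> (z + (- s) \<cdot>\<^sub>v w) \<bullet> (N *\<^sub>v (z + (- s) \<cdot>\<^sub>v w))"
    using psd z w by (simp add: pos_semidef_def)
  also have "\<dots> = z \<bullet> w - 2 * s * (w \<bullet> w) + s\<^sup>2 * (w \<bullet> (N *\<^sub>v w))"
    using symmetric_quadratic_form_add_smult[OF N sym z w, of "- s"] by (simp add: w_def)
  also have "s\<^sup>2 * (w \<bullet> (N *\<^sub>v w)) \<le> s * (s * \<kappa> * (w \<bullet> w))"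
    using abs_quadratic_form_le[OF N w] s
    by (simp add: \<kappa>_def power2_eq_square mult.assoc mult_left_mono)
  also have "\<dots> \<le> s * (w \<bullet> w)"
    using mult_left_mono[OF mult_right_mono[OF s(2) scalar_prod_self_nonneg] less_imp_le[OF s(1)]]
    by simp
  finally have "s * (w \<bullet> w) \<le> z \<bullet> w"
    by simp
  then show ?thesis
    using \<kappa> by (simp add: s_def w_def \<kappa>_def field_simps)
qed

lemma pos_semidef_det_nonzero_imp_coercive:
  assumes N: "(N :: real mat) \<in> carrier_mat m m" and sym: "transpose_mat N = N"
    and psd: "pos_semidef m N" and det: "det N \<noteq> 0"
  shows "coercive m N"
proof -
  obtain B where "mat_inverse N = Some B"
    using mat_inverse_exists[OF N det] .
  with mat_inverse(2)[OF N] have B: "B \<in> carrier_mat m m" "B * N = 1\<^sub>m m"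
    by auto
  define D where "D = (mat_abs_sum B)\<^sup>2 * (mat_abs_sum N + 1) + 1"
  have "0 \<le> (mat_abs_sum B)\<^sup>2 * (mat_abs_sum N + 1)"
    by (simp add: mat_abs_sum_nonneg)
  then have D: "0 < D"
    by (simp add: D_def)
  have "1 / D * (z \<bullet> z) \<le> z \<bullet> (N *\<^sub>v z)" if z: "z \<in> carrier_vec m" for z
  proof -
    have "z = B *\<^sub>v (N *\<^sub>v z)"
      using B N z by (metis assoc_mult_mat_vec one_mult_mat_vec)
    then have "z \<bullet> z \<le> (mat_abs_sum B)\<^sup>2 * ((N *\<^sub>v z) \<bullet> (N *\<^sub>v z))"
      using mult_mat_vec_square_le[OF B(1), of "N *\<^sub>v z"] N z by simp
    also have "\<dots> \<le> (mat_abs_sum B)\<^sup>2 * ((mat_abs_sum N + 1) * (z \<bullet> (N *\<^sub>v z)))"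
      using pos_semidef_mult_vec_square_le[OF N sym psd z] by (simp add: mult_left_mono)
    also have "\<dots> \<le> D * (z \<bullet> (N *\<^sub>v z))"
      using psd z by (simp add: D_def pos_semidef_def algebra_simps)
    finally show ?thesis
      using D by (simp add: field_simps)
  qed
  then show ?thesis
    using D unfolding coercive_def by (intro exI[of _ "1 / D"]) auto
qed

lemma coercive_imp_pos_semidef: "coercive m N \<Longrightarrow> pos_semidef m N"
  unfolding coercive_def pos_semidef_def
  by (meson order_trans scalar_prod_self_nonneg less_imp_le mult_nonneg_nonneg)

lemma coercive_imp_det_nonzero:
  assumes N: "(N :: real mat) \<in> carrier_mat m m" and "coercive m N"
  shows "det N \<noteq> 0"
proof
  assume "det N = 0"
  then obtain z where z: "z \<in> carrier_vec m" "z \<noteq> 0\<^sub>v m" "N *\<^sub>v z = 0\<^sub>v m"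
    using det_0_iff_vec_prod_zero[OF N] by blast
  obtain c where "0 < c" "c * (z \<bullet> z) \<le> z \<bullet> (N *\<^sub>v z)"
    using \<open>coercive m N\<close> z(1) by (auto simp: coercive_def)
  with z have "z \<bullet> z \<le> 0"
    by (simp add: mult_le_0_iff)
  with z(1,2) show False
    using scalar_prod_self_nonneg[of z] scalar_prod_self_eq_0_iff[OF z(1)] by simp
qed

lemma pos_semidef_nonpos_eigenvector_eq_0:
  assumes N: "(N :: real mat) \<in> carrier_mat m m" and "pos_semidef m N" and "det N \<noteq> 0"
    and z: "z \<in> carrier_vec m" and "0 \<le> l" and eig: "N *\<^sub>v z = (- l) \<cdot>\<^sub>v z"
  shows "z = 0\<^sub>v m"
proof (cases "l = 0")
  case True
  with eig z have "N *\<^sub>v z = 0\<^sub>v m"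
    by (auto simp: vec_eq_iff)
  with \<open>det N \<noteq> 0\<close> z show ?thesis
    using det_0_iff_vec_prod_zero[OF N] by blast
next
  case False
  have "0 \<le> - l * (z \<bullet> z)"
    using \<open>pos_semidef m N\<close> z eig by (auto simp: pos_semidef_def)
  with False \<open>0 \<le> l\<close> have "z \<bullet> z = 0"
    using scalar_prod_self_nonneg[of z] by (simp add: mult_le_0_iff)
  with z show ?thesis
    by (simp add: scalar_prod_self_eq_0_iff)
qed

section \<open>Quadratic pencils\<close>

definition quad_pencil :: "real mat \<Rightarrow> real mat \<Rightarrow> real mat \<Rightarrow> real \<Rightarrow> real mat" where
  "quad_pencil A B E \<omega> = \<omega>\<^sup>2 \<cdot>\<^sub>m A + B + \<omega> \<cdot>\<^sub>m E"

context
  fixes m :: nat and A B E :: "real mat"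
  assumes A: "A \<in> carrier_mat m m" and B: "B \<in> carrier_mat m m" and E: "E \<in> carrier_mat m m"
begin

lemma quad_pencil_carrier: "quad_pencil A B E \<omega> \<in> carrier_mat m m"
  using A B E by (simp add: quad_pencil_def)

lemma quad_pencil_symmetric:
  assumes "transpose_mat A = A" and "transpose_mat B = B" and "transpose_mat E = E"
  shows "transpose_mat (quad_pencil A B E \<omega>) = quad_pencil A B E \<omega>"
  using A B E assms by (simp add: quad_pencil_def transpose_add[of _ m m] transpose_smult_mat)

lemma quad_pencil_form:
  assumes z: "z \<in> carrier_vec m"
  shows "z \<bullet> (quad_pencil A B E \<omega> *\<^sub>v z)
    = \<omega>\<^sup>2 * (z \<bullet> (A *\<^sub>v z)) + z \<bullet> (B *\<^sub>v z) + \<omega> * (z \<bullet> (E *\<^sub>v z))"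
  using A B E z
  by (simp add: quad_pencil_def add_mult_distrib_mat_vec[of _ m m] smult_mat_mult_mat_vec
      scalar_prod_add_distrib[of _ m])

lemma open_not_pos_semidef_quad_pencil: "open {\<omega>. \<not> pos_semidef m (quad_pencil A B E \<omega>)}"
proof -
  have "{\<omega>. \<not> pos_semidef m (quad_pencil A B E \<omega>)}
    = (\<Union>z \<in> carrier_vec m. {\<omega>. \<omega>\<^sup>2 * (z \<bullet> (A *\<^sub>v z)) + z \<bullet> (B *\<^sub>v z) + \<omega> * (z \<bullet> (E *\<^sub>v z)) < 0})"
    by (auto simp: pos_semidef_def quad_pencil_form not_le)
  also have "open \<dots>"
    by (intro open_UN ballI open_Collect_less continuous_intros)
  finally show ?thesis .
qed

lemma quad_pencil_form_diff_le:
  assumes z: "z \<in> carrier_vec m"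
  shows "\<bar>z \<bullet> (quad_pencil A B E \<omega>' *\<^sub>v z) - z \<bullet> (quad_pencil A B E \<omega> *\<^sub>v z)\<bar>
    \<le> \<bar>\<omega>' - \<omega>\<bar> * (((\<bar>\<omega>'\<bar> + \<bar>\<omega>\<bar>) * mat_abs_sum A + mat_abs_sum E) * (z \<bullet> z))"
proof -
  define a where "a = z \<bullet> (A *\<^sub>v z)"
  define e where "e = z \<bullet> (E *\<^sub>v z)"
  have diff: "z \<bullet> (quad_pencil A B E \<omega>' *\<^sub>v z) - z \<bullet> (quad_pencil A B E \<omega> *\<^sub>v z)
      = (\<omega>' - \<omega>) * ((\<omega>' + \<omega>) * a + e)"
    by (simp add: quad_pencil_form[OF z] a_def e_def power2_eq_square algebra_simps)
  have "\<bar>(\<omega>' + \<omega>) * a + e\<bar> \<le> \<bar>\<omega>' + \<omega>\<bar> * \<bar>a\<bar> + \<bar>e\<bar>"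
    by (metis abs_mult abs_triangle_ineq)
  also have "\<dots> \<le> (\<bar>\<omega>'\<bar> + \<bar>\<omega>\<bar>) * (mat_abs_sum A * (z \<bullet> z)) + mat_abs_sum E * (z \<bullet> z)"
    using abs_quadratic_form_le[OF A z] abs_quadratic_form_le[OF E z]
    by (intro add_mono mult_mono) (auto simp: a_def e_def)
  also have "\<dots> = ((\<bar>\<omega>'\<bar> + \<bar>\<omega>\<bar>) * mat_abs_sum A + mat_abs_sum E) * (z \<bullet> z)"
    by (simp add: algebra_simps)
  finally show ?thesis
    unfolding diff abs_mult by (rule mult_left_mono) simp
qed

lemma open_coercive_quad_pencil: "open {\<omega>. coercive m (quad_pencil A B E \<omega>)}"
  unfolding open_dist
proof (intro ballI)
  fix \<omega>\<^sub>0 assume "\<omega>\<^sub>0 \<in> {\<omega>. coercive m (quad_pencil A B E \<omega>)}"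
  then obtain c where c: "0 < c"
    and c_le: "\<And>z. z \<in> carrier_vec m \<Longrightarrow> c * (z \<bullet> z) \<le> z \<bullet> (quad_pencil A B E \<omega>\<^sub>0 *\<^sub>v z)"
    by (auto simp: coercive_def)
  define K where "K = (2 * \<bar>\<omega>\<^sub>0\<bar> + 1) * mat_abs_sum A + mat_abs_sum E"
  have K: "0 \<le> K"
    by (simp add: K_def mat_abs_sum_nonneg)
  define \<delta> where "\<delta> = min 1 (c / (2 * (K + 1)))"
  have \<delta>: "0 < \<delta>" "\<delta> \<le> 1"
    using c K by (simp_all add: \<delta>_def)
  have "\<delta> * K \<le> c / (2 * (K + 1)) * (K + 1)"
    using K c by (intro mult_mono) (auto simp: \<delta>_def)
  also have "\<dots> = c / 2"
    using K by (simp add: field_simps)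
  finally have \<delta>K: "\<delta> * K \<le> c / 2" .
  have "coercive m (quad_pencil A B E \<omega>)" if \<omega>: "dist \<omega> \<omega>\<^sub>0 < \<delta>" for \<omega>
  proof -
    have "c / 2 * (z \<bullet> z) \<le> z \<bullet> (quad_pencil A B E \<omega> *\<^sub>v z)" if z: "z \<in> carrier_vec m" for z
    proof -
      have "(\<bar>\<omega>\<bar> + \<bar>\<omega>\<^sub>0\<bar>) * mat_abs_sum A + mat_abs_sum E \<le> K"
        using \<omega> \<delta> by (auto simp: K_def dist_real_def mat_abs_sum_nonneg intro!: mult_right_mono)
      then have "\<bar>\<omega> - \<omega>\<^sub>0\<bar> * (((\<bar>\<omega>\<bar> + \<bar>\<omega>\<^sub>0\<bar>) * mat_abs_sum A + mat_abs_sum E) * (z \<bullet> z))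
          \<le> \<delta> * (K * (z \<bullet> z))"
        using \<omega>
        by (intro mult_mono) (auto simp: dist_real_def scalar_prod_self_nonneg K mat_abs_sum_nonneg)
      also have "\<dots> \<le> c / 2 * (z \<bullet> z)"
        using mult_right_mono[OF \<delta>K scalar_prod_self_nonneg] by (simp add: mult.assoc)
      finally show ?thesis
        using quad_pencil_form_diff_le[OF z, of \<omega> \<omega>\<^sub>0] c_le[OF z] by linarith
    qed
    then show ?thesis
      using c by (auto simp: coercive_def intro!: exI[of _ "c / 2"])
  qed
  then show "\<exists>\<delta>>0. \<forall>\<omega>. dist \<omega> \<omega>\<^sub>0 < \<delta> \<longrightarrow> \<omega> \<in> {\<omega>. coercive m (quad_pencil A B E \<omega>)}"
    using \<delta> by auto
qed

lemma coercive_quad_pencil_exists: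
  assumes "coercive m A"
  obtains \<omega> where "coercive m (quad_pencil A B E \<omega>)"
proof -
  obtain C where C: "0 < C" and C_le: "\<And>z. z \<in> carrier_vec m \<Longrightarrow> C * (z \<bullet> z) \<le> z \<bullet> (A *\<^sub>v z)"
    using assms by (auto simp: coercive_def)
  define \<beta> where "\<beta> = mat_abs_sum B"
  define \<epsilon> where "\<epsilon> = mat_abs_sum E"
  define \<omega> where "\<omega> = (\<beta> + \<epsilon> + 1) / C + 1"
    \<comment> \<open>large enough for \<open>\<omega>\<^sup>2 C - \<omega> \<epsilon> - \<beta> \<ge> 1\<close>\<close>
  have \<beta>\<epsilon>: "0 \<le> \<beta>" "0 \<le> \<epsilon>"
    by (simp_all add: \<beta>_def \<epsilon>_def mat_abs_sum_nonneg)
  have \<omega>: "1 \<le> \<omega>" "\<beta> + 1 \<le> \<omega> * C - \<epsilon>"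
    using C \<beta>\<epsilon> by (simp_all add: \<omega>_def field_simps)
  have "1 * (z \<bullet> z) \<le> z \<bullet> (quad_pencil A B E \<omega> *\<^sub>v z)" if z: "z \<in> carrier_vec m" for z
  proof -
    define Z where "Z = z \<bullet> z"
    have Z: "0 \<le> Z"
      by (simp add: Z_def scalar_prod_self_nonneg)
    have "\<omega>\<^sup>2 * (C * Z) \<le> \<omega>\<^sup>2 * (z \<bullet> (A *\<^sub>v z))"
      using C_le[OF z] by (simp add: Z_def mult_left_mono)
    moreover have "- (\<beta> * Z) \<le> z \<bullet> (B *\<^sub>v z)"
      using abs_quadratic_form_le[OF B z] by (auto simp: Z_def \<beta>_def)
    moreover have "- (\<epsilon> * Z) \<le> z \<bullet> (E *\<^sub>v z)"
      using abs_quadratic_form_le[OF E z] by (auto simp: Z_def \<epsilon>_def)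
    then have "\<omega> * (- (\<epsilon> * Z)) \<le> \<omega> * (z \<bullet> (E *\<^sub>v z))"
      using \<omega>(1) by (intro mult_left_mono) auto
    moreover have "\<beta> * Z + Z \<le> \<omega> * ((\<omega> * C - \<epsilon>) * Z)"
      using \<omega> \<beta>\<epsilon> Z mult_mono[OF \<omega>(1) mult_right_mono[OF \<omega>(2) Z]] by (simp add: distrib_right)
    moreover have "\<omega> * ((\<omega> * C - \<epsilon>) * Z) = \<omega>\<^sup>2 * (C * Z) + \<omega> * (- (\<epsilon> * Z))"
      by (simp add: power2_eq_square algebra_simps)
    ultimately show ?thesis
      unfolding quad_pencil_form[OF z] Z_def[symmetric] by linarith
  qed
  then show ?thesis
    by (intro that) (auto simp: coercive_def intro!: exI[of _ 1])
qed

end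

lemma quad_pencil_pos_semidef:
  fixes A B E :: "real mat"
  assumes carrier: "A \<in> carrier_mat m m" "B \<in> carrier_mat m m" "E \<in> carrier_mat m m"
    and sym: "transpose_mat A = A" "transpose_mat B = B" "transpose_mat E = E"
    and "coercive m A" and det: "\<And>\<omega>. det (quad_pencil A B E \<omega>) \<noteq> 0"
  shows "pos_semidef m (quad_pencil A B E \<omega>)"
proof -
  define U where "U = {\<omega>. coercive m (quad_pencil A B E \<omega>)}"
  define V where "V = {\<omega>. \<not> pos_semidef m (quad_pencil A B E \<omega>)}"
  have "\<omega> \<in> U \<union> V" for \<omega>
    using pos_semidef_det_nonzero_imp_coercive[OF quad_pencil_carrier[OF carrier]
        quad_pencil_symmetric[OF carrier sym] _ det]
    by (auto simp: U_def V_def)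
  moreover have "U \<inter> V = {}"
    using coercive_imp_pos_semidef by (auto simp: U_def V_def)
  moreover obtain \<omega>\<^sub>0 where "\<omega>\<^sub>0 \<in> U"
    using coercive_quad_pencil_exists[OF carrier \<open>coercive m A\<close>] by (auto simp: U_def)
  moreover have "open U" "open V"
    unfolding U_def V_def
    using open_coercive_quad_pencil[OF carrier] open_not_pos_semidef_quad_pencil[OF carrier] .
  ultimately have "V = {}"
    using connectedD[OF connected_UNIV, of U V] by auto
  then show ?thesis
    by (auto simp: V_def)
qed

section \<open>Imaginary eigenvalues of real matrices\<close>

lemma map_vec_Re_of_real_mult_mat_vec:
  assumes "T \<in> carrier_mat m k" and "v \<in> carrier_vec k"
  shows "map_vec Re (map_mat complex_of_real T *\<^sub>v v) = T *\<^sub>v map_vec Re v"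
  using assms by (intro eq_vecI) (auto simp: scalar_prod_def Re_sum)

lemma map_vec_Im_of_real_mult_mat_vec:
  assumes "T \<in> carrier_mat m k" and "v \<in> carrier_vec k"
  shows "map_vec Im (map_mat complex_of_real T *\<^sub>v v) = T *\<^sub>v map_vec Im v"
  using assms by (intro eq_vecI) (auto simp: scalar_prod_def Im_sum)

lemma of_real_mult_mat_vec_eq_imaginary_smult_iff:
  assumes T: "T \<in> carrier_mat m m" and v: "v \<in> carrier_vec m"
  shows "map_mat complex_of_real T *\<^sub>v v = Complex 0 \<omega> \<cdot>\<^sub>v v \<longleftrightarrow>
    T *\<^sub>v map_vec Re v = (- \<omega>) \<cdot>\<^sub>v map_vec Im v \<and> T *\<^sub>v map_vec Im v = \<omega> \<cdot>\<^sub>v map_vec Re v"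
  (is "?lhs = ?rhs \<longleftrightarrow> _")
proof -
  have "?lhs = ?rhs \<longleftrightarrow> map_vec Re ?lhs = map_vec Re ?rhs \<and> map_vec Im ?lhs = map_vec Im ?rhs"
    using T v by (auto simp: vec_eq_iff complex_eq_iff)
  also have "\<dots> \<longleftrightarrow> T *\<^sub>v map_vec Re v = (- \<omega>) \<cdot>\<^sub>v map_vec Im v \<and> T *\<^sub>v map_vec Im v = \<omega> \<cdot>\<^sub>v map_vec Re v"
    using T v
    by (simp add: map_vec_Re_of_real_mult_mat_vec map_vec_Im_of_real_mult_mat_vec)
      (auto simp: vec_eq_iff)
  finally show ?thesis .
qed

lemma eigenvalue_of_real_imaginary_iff:
  assumes T: "T \<in> carrier_mat m m"
  shows "eigenvalue (map_mat complex_of_real T) (Complex 0 \<omega>) \<longleftrightarrow>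
    (\<exists>u \<in> carrier_vec m. \<exists>w \<in> carrier_vec m. (u \<noteq> 0\<^sub>v m \<or> w \<noteq> 0\<^sub>v m) \<and>
       T *\<^sub>v u = (- \<omega>) \<cdot>\<^sub>v w \<and> T *\<^sub>v w = \<omega> \<cdot>\<^sub>v u)"
proof
  assume "eigenvalue (map_mat complex_of_real T) (Complex 0 \<omega>)"
  then obtain v where v: "v \<in> carrier_vec m" "v \<noteq> 0\<^sub>v m"
    and eig: "map_mat complex_of_real T *\<^sub>v v = Complex 0 \<omega> \<cdot>\<^sub>v v"
    using T by (auto simp: eigenvalue_def eigenvector_def)
  have "map_vec Re v \<noteq> 0\<^sub>v m \<or> map_vec Im v \<noteq> 0\<^sub>v m"
    using v by (auto simp: vec_eq_iff complex_eq_iff)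
  moreover have "T *\<^sub>v map_vec Re v = (- \<omega>) \<cdot>\<^sub>v map_vec Im v" "T *\<^sub>v map_vec Im v = \<omega> \<cdot>\<^sub>v map_vec Re v"
    using eig of_real_mult_mat_vec_eq_imaginary_smult_iff[OF T v(1)] by blast+
  ultimately show "\<exists>u \<in> carrier_vec m. \<exists>w \<in> carrier_vec m. (u \<noteq> 0\<^sub>v m \<or> w \<noteq> 0\<^sub>v m) \<and>
      T *\<^sub>v u = (- \<omega>) \<cdot>\<^sub>v w \<and> T *\<^sub>v w = \<omega> \<cdot>\<^sub>v u"
    using v(1) by (intro bexI[of _ "map_vec Re v"] bexI[of _ "map_vec Im v"]) auto
next
  assume "\<exists>u \<in> carrier_vec m. \<exists>w \<in> carrier_vec m. (u \<noteq> 0\<^sub>v m \<or> w \<noteq> 0\<^sub>v m) \<and>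
    T *\<^sub>v u = (- \<omega>) \<cdot>\<^sub>v w \<and> T *\<^sub>v w = \<omega> \<cdot>\<^sub>v u"
  then obtain u w where uw: "u \<in> carrier_vec m" "w \<in> carrier_vec m" "u \<noteq> 0\<^sub>v m \<or> w \<noteq> 0\<^sub>v m"
    and eqs: "T *\<^sub>v u = (- \<omega>) \<cdot>\<^sub>v w" "T *\<^sub>v w = \<omega> \<cdot>\<^sub>v u"
    by blast
  define v where "v = vec m (\<lambda>j. Complex (u $ j) (w $ j))"
  have v: "v \<in> carrier_vec m" "map_vec Re v = u" "map_vec Im v = w"
    using uw by (auto simp: v_def)
  then have "v \<noteq> 0\<^sub>v m"
    using uw by auto
  moreover have "map_mat complex_of_real T *\<^sub>v v = Complex 0 \<omega> \<cdot>\<^sub>v v"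
    using of_real_mult_mat_vec_eq_imaginary_smult_iff[OF T v(1)] eqs v by simp
  ultimately show "eigenvalue (map_mat complex_of_real T) (Complex 0 \<omega>)"
    using T v by (auto simp: eigenvalue_def eigenvector_def)
qed

lemma hyperbolic_iff:
  "hyperbolic T \<longleftrightarrow> (\<forall>\<omega>. \<not> eigenvalue (map_mat complex_of_real T) (Complex 0 \<omega>))"
  unfolding hyperbolic_def by (metis complex.sel(1) complex_surj)

section \<open>The matrices \<open>J B\<^sub>\<lambda>\<close>\<close>

text \<open>\<open>quad_pencil (diag_block n P) (diag_block n R) (skew_block n Q) \<omega>\<close> is the real form of
  \<open>H(\<omega>) = \<omega>\<^sup>2 P + R + i\<omega> (Q\<^sup>T - Q)\<close>, acting on \<open>(Re y, Im y)\<close>.\<close>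

definition diag_block :: "nat \<Rightarrow> real mat \<Rightarrow> real mat" where
  "diag_block n A = four_block_mat A (0\<^sub>m n n) (0\<^sub>m n n) A"

definition skew_block :: "nat \<Rightarrow> real mat \<Rightarrow> real mat" where
  "skew_block n Q =
    four_block_mat (0\<^sub>m n n) (Q - transpose_mat Q) (- (Q - transpose_mat Q)) (0\<^sub>m n n)"

lemma diag_block_carrier: "A \<in> carrier_mat n n \<Longrightarrow> diag_block n A \<in> carrier_mat (n + n) (n + n)"
  by (simp add: diag_block_def)

lemma skew_block_carrier: "Q \<in> carrier_mat n n \<Longrightarrow> skew_block n Q \<in> carrier_mat (n + n) (n + n)"
  by (simp add: skew_block_def)

lemma diag_block_mult_append:
  assumes "A \<in> carrier_mat n n" and "a \<in> carrier_vec n" and "b \<in> carrier_vec n"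
  shows "diag_block n A *\<^sub>v (a @\<^sub>v b) = (A *\<^sub>v a) @\<^sub>v (A *\<^sub>v b)"
  unfolding diag_block_def using mult_mat_vec_split[OF assms(1) assms] .

lemma skew_block_mult_append:
  assumes "Q \<in> carrier_mat n n" and "a \<in> carrier_vec n" and "b \<in> carrier_vec n"
  shows "skew_block n Q *\<^sub>v (a @\<^sub>v b)
    = (Q *\<^sub>v b - transpose_mat Q *\<^sub>v b) @\<^sub>v (transpose_mat Q *\<^sub>v a - Q *\<^sub>v a)"
  unfolding skew_block_def using assms
  by (subst four_block_mat_mult_vec[of _ n n])
    (auto simp: vec_eq_iff minus_mult_distrib_mat_vec[of _ n n])

lemma transpose_diag_block:
  assumes "A \<in> carrier_mat n n" and "transpose_mat A = A"
  shows "transpose_mat (diag_block n A) = diag_block n A"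
  unfolding diag_block_def using assms
  by (subst transpose_four_block_mat[of _ n n]) auto

lemma transpose_skew_block:
  assumes "Q \<in> carrier_mat n n"
  shows "transpose_mat (skew_block n Q) = skew_block n Q"
proof -
  have "transpose_mat (Q - transpose_mat Q) = - (Q - transpose_mat Q)"
    using assms by (intro eq_matI) auto
  then show ?thesis
    unfolding skew_block_def using assms
    by (subst transpose_four_block_mat[of _ n n]) (auto simp: transpose_uminus)
qed

lemma quad_pencil_blocks_mult_append:
  assumes P: "P \<in> carrier_mat n n" and Q: "Q \<in> carrier_mat n n" and R: "R \<in> carrier_mat n n"
    and a: "a \<in> carrier_vec n" and b: "b \<in> carrier_vec n"
  shows "quad_pencil (diag_block n P) (diag_block n R) (skew_block n Q) \<omega> *\<^sub>v (a @\<^sub>v b)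
    = (\<omega>\<^sup>2 \<cdot>\<^sub>v (P *\<^sub>v a) + R *\<^sub>v a + \<omega> \<cdot>\<^sub>v (Q *\<^sub>v b - transpose_mat Q *\<^sub>v b)) @\<^sub>v
      (\<omega>\<^sup>2 \<cdot>\<^sub>v (P *\<^sub>v b) + R *\<^sub>v b + \<omega> \<cdot>\<^sub>v (transpose_mat Q *\<^sub>v a - Q *\<^sub>v a))"
  using assms
  by (simp add: quad_pencil_def add_mult_distrib_mat_vec[of _ "n + n" "n + n"]
      smult_mat_mult_mat_vec[of _ "n + n" "n + n"] diag_block_carrier skew_block_carrier
      diag_block_mult_append skew_block_mult_append)
    (auto simp: vec_eq_iff)

lemma quad_pencil_blocks_carrier:
  assumes "P \<in> carrier_mat n n" and "Q \<in> carrier_mat n n" and "R \<in> carrier_mat n n"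
  shows "quad_pencil (diag_block n P) (diag_block n R) (skew_block n Q) \<omega>
    \<in> carrier_mat (n + n) (n + n)"
  using assms by (simp add: quad_pencil_def diag_block_carrier skew_block_carrier)

lemma coercive_diag_block:
  assumes A: "A \<in> carrier_mat n n" and "coercive n A"
  shows "coercive (n + n) (diag_block n A)"
proof -
  obtain c where c: "0 < c" and c_le: "\<And>z. z \<in> carrier_vec n \<Longrightarrow> c * (z \<bullet> z) \<le> z \<bullet> (A *\<^sub>v z)"
    using \<open>coercive n A\<close> by (auto simp: coercive_def)
  have "c * (z \<bullet> z) \<le> z \<bullet> (diag_block n A *\<^sub>v z)" if z: "z \<in> carrier_vec (n + n)" for z
  proof -
    define a b where "a = vec_first z n" and "b = vec_last z n"
    have ab: "a \<in> carrier_vec n" "b \<in> carrier_vec n" "z = a @\<^sub>v b"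
      using z by (simp_all add: a_def b_def)
    have "c * (z \<bullet> z) = c * (a \<bullet> a) + c * (b \<bullet> b)"
      using ab by (simp add: scalar_prod_append distrib_left)
    also have "\<dots> \<le> a \<bullet> (A *\<^sub>v a) + b \<bullet> (A *\<^sub>v b)"
      using c_le ab by (intro add_mono) auto
    also have "\<dots> = z \<bullet> (diag_block n A *\<^sub>v z)"
      using A ab by (simp add: diag_block_mult_append scalar_prod_append)
    finally show ?thesis .
  qed
  with c show ?thesis
    by (auto simp: coercive_def)
qed

lemma J_mat_mult_append:
  assumes "a \<in> carrier_vec n" and "b \<in> carrier_vec n"
  shows "J_mat n *\<^sub>v (a @\<^sub>v b) = (- b) @\<^sub>v a"
  unfolding J_mat_def using assms
  by (subst four_block_mat_mult_vec[of _ n n]) (auto simp: vec_eq_iff)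

context
  fixes n :: nat and P Q R Pi :: "real mat"
  assumes P: "P \<in> carrier_mat n n" and Q: "Q \<in> carrier_mat n n" and R: "R \<in> carrier_mat n n"
    and inv: "mat_inverse P = Some Pi"
begin

lemma Pi_carrier: "Pi \<in> carrier_mat n n"
  using mat_inverse(2)[OF P inv] by simp

lemma Pi_mult_vec_eq_iff:
  assumes a: "a \<in> carrier_vec n" and b: "b \<in> carrier_vec n"
  shows "Pi *\<^sub>v a = b \<longleftrightarrow> a = P *\<^sub>v b"
  using mat_inverse(2)[OF P inv] P a b
  by (metis assoc_mult_mat_vec one_mult_mat_vec)

lemma B_mat_carrier: "B_mat n P Q R l \<in> carrier_mat (n + n) (n + n)"
  using P Q R Pi_carrier by (simp add: B_mat_def inv minus_carrier_mat)

lemma B_mat_mult_append: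
  assumes x: "x \<in> carrier_vec n" and y: "y \<in> carrier_vec n"
  shows "B_mat n P Q R l *\<^sub>v (x @\<^sub>v y) = Pi *\<^sub>v (x - Q *\<^sub>v y) @\<^sub>v
    (- (transpose_mat Q *\<^sub>v (Pi *\<^sub>v (x - Q *\<^sub>v y))) - R *\<^sub>v y - l \<cdot>\<^sub>v y)"
proof -
  have Qt: "transpose_mat Q \<in> carrier_mat n n"
    using Q by simp
  have "B_mat n P Q R l *\<^sub>v (x @\<^sub>v y) = (Pi *\<^sub>v x + (- (Pi * Q)) *\<^sub>v y) @\<^sub>v
      ((- (transpose_mat Q * Pi)) *\<^sub>v x + (transpose_mat Q * Pi * Q - R - l \<cdot>\<^sub>m 1\<^sub>m n) *\<^sub>v y)"
    unfolding B_mat_def inv Let_def option.sel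
    using P Q R Pi_carrier x y by (intro four_block_mat_mult_vec) auto
  also have "(transpose_mat Q * Pi * Q - R - l \<cdot>\<^sub>m 1\<^sub>m n) *\<^sub>v y
      = transpose_mat Q *\<^sub>v (Pi *\<^sub>v (Q *\<^sub>v y)) - R *\<^sub>v y - l \<cdot>\<^sub>v y"
    using Qt Pi_carrier Q R y
    by (simp add: minus_mult_distrib_mat_vec[of _ n n] smult_mat_mult_mat_vec[of _ n n]
        minus_carrier_mat assoc_mult_mat_vec[OF Qt mult_carrier_mat[OF Pi_carrier Q] y]
        assoc_mult_mat_vec[OF Pi_carrier Q y])
  finally show ?thesis
    using Qt Pi_carrier Q R x y
    by (simp add: mult_minus_distrib_mat_vec[of _ n n]) (auto simp: vec_eq_iff)
qed

lemma J_B_mult_append: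
  assumes x: "x \<in> carrier_vec n" and y: "y \<in> carrier_vec n"
  shows "(J_mat n * B_mat n P Q R l) *\<^sub>v (x @\<^sub>v y) =
    (transpose_mat Q *\<^sub>v (Pi *\<^sub>v (x - Q *\<^sub>v y)) + R *\<^sub>v y + l \<cdot>\<^sub>v y) @\<^sub>v Pi *\<^sub>v (x - Q *\<^sub>v y)"
proof -
  have "(J_mat n * B_mat n P Q R l) *\<^sub>v (x @\<^sub>v y) = J_mat n *\<^sub>v (B_mat n P Q R l *\<^sub>v (x @\<^sub>v y))"
    using B_mat_carrier x y by (intro assoc_mult_mat_vec) (auto simp: J_mat_def)
  also have "\<dots> = (transpose_mat Q *\<^sub>v (Pi *\<^sub>v (x - Q *\<^sub>v y)) + R *\<^sub>v y + l \<cdot>\<^sub>v y) @\<^sub>v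
      Pi *\<^sub>v (x - Q *\<^sub>v y)"
    unfolding B_mat_mult_append[OF x y] using Q R Pi_carrier x y
    by (subst J_mat_mult_append) (auto simp: vec_eq_iff)
  finally show ?thesis .
qed

lemma J_B_mult_append_eq_smult_iff:
  assumes x: "x \<in> carrier_vec n" and y: "y \<in> carrier_vec n"
    and x': "x' \<in> carrier_vec n" and y': "y' \<in> carrier_vec n"
  shows "(J_mat n * B_mat n P Q R l) *\<^sub>v (x @\<^sub>v y) = c \<cdot>\<^sub>v (x' @\<^sub>v y') \<longleftrightarrow>
    x = Q *\<^sub>v y + c \<cdot>\<^sub>v (P *\<^sub>v y') \<and> c \<cdot>\<^sub>v (transpose_mat Q *\<^sub>v y') + R *\<^sub>v y + l \<cdot>\<^sub>v y = c \<cdot>\<^sub>v x'"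
proof -
  have "Pi *\<^sub>v (x - Q *\<^sub>v y) = c \<cdot>\<^sub>v y' \<longleftrightarrow> x - Q *\<^sub>v y = c \<cdot>\<^sub>v (P *\<^sub>v y')"
    using Pi_mult_vec_eq_iff[of "x - Q *\<^sub>v y" "c \<cdot>\<^sub>v y'"] P Q x y y' by (simp add: mult_mat_vec)
  also have "\<dots> \<longleftrightarrow> x = Q *\<^sub>v y + c \<cdot>\<^sub>v (P *\<^sub>v y')"
    using P Q x y y' by (auto simp: vec_eq_iff)
  finally have "Pi *\<^sub>v (x - Q *\<^sub>v y) = c \<cdot>\<^sub>v y' \<longleftrightarrow> x = Q *\<^sub>v y + c \<cdot>\<^sub>v (P *\<^sub>v y')" .
  then show ?thesis
    unfolding J_B_mult_append[OF x y] smult_append_vec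
    using Q R Pi_carrier x y x' y'
    by (subst append_vec_eq) (auto simp: mult_mat_vec)
qed

lemma J_B_imaginary_pair_iff:
  assumes x1: "x1 \<in> carrier_vec n" and y1: "y1 \<in> carrier_vec n"
    and x2: "x2 \<in> carrier_vec n" and y2: "y2 \<in> carrier_vec n"
  shows "(J_mat n * B_mat n P Q R l) *\<^sub>v (x1 @\<^sub>v y1) = (- \<omega>) \<cdot>\<^sub>v (x2 @\<^sub>v y2) \<and>
      (J_mat n * B_mat n P Q R l) *\<^sub>v (x2 @\<^sub>v y2) = \<omega> \<cdot>\<^sub>v (x1 @\<^sub>v y1) \<longleftrightarrow>
    x1 = Q *\<^sub>v y1 + (- \<omega>) \<cdot>\<^sub>v (P *\<^sub>v y2) \<and> x2 = Q *\<^sub>v y2 + \<omega> \<cdot>\<^sub>v (P *\<^sub>v y1) \<and>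
    quad_pencil (diag_block n P) (diag_block n R) (skew_block n Q) \<omega> *\<^sub>v (y1 @\<^sub>v y2)
      = (- l) \<cdot>\<^sub>v (y1 @\<^sub>v y2)"
proof (cases "x1 = Q *\<^sub>v y1 + (- \<omega>) \<cdot>\<^sub>v (P *\<^sub>v y2) \<and> x2 = Q *\<^sub>v y2 + \<omega> \<cdot>\<^sub>v (P *\<^sub>v y1)")
  case True
  have "(- \<omega>) \<cdot>\<^sub>v (transpose_mat Q *\<^sub>v y2) + R *\<^sub>v y1 + l \<cdot>\<^sub>v y1 = (- \<omega>) \<cdot>\<^sub>v x2 \<longleftrightarrow>
      \<omega>\<^sup>2 \<cdot>\<^sub>v (P *\<^sub>v y1) + R *\<^sub>v y1 + \<omega> \<cdot>\<^sub>v (Q *\<^sub>v y2 - transpose_mat Q *\<^sub>v y2) = (- l) \<cdot>\<^sub>v y1"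
    using True P Q R y1 y2
    by (intro vec_eq_iff_componentwise[of _ n]) (auto simp: power2_eq_square algebra_simps)
  moreover have "\<omega> \<cdot>\<^sub>v (transpose_mat Q *\<^sub>v y1) + R *\<^sub>v y2 + l \<cdot>\<^sub>v y2 = \<omega> \<cdot>\<^sub>v x1 \<longleftrightarrow>
      \<omega>\<^sup>2 \<cdot>\<^sub>v (P *\<^sub>v y2) + R *\<^sub>v y2 + \<omega> \<cdot>\<^sub>v (transpose_mat Q *\<^sub>v y1 - Q *\<^sub>v y1) = (- l) \<cdot>\<^sub>v y2"
    using True P Q R y1 y2
    by (intro vec_eq_iff_componentwise[of _ n]) (auto simp: power2_eq_square algebra_simps)
  ultimately show ?thesis
    unfolding J_B_mult_append_eq_smult_iff[OF x1 y1 x2 y2]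
      J_B_mult_append_eq_smult_iff[OF x2 y2 x1 y1]
    unfolding quad_pencil_blocks_mult_append[OF P Q R y1 y2] smult_append_vec
    using True P Q R y1 y2 by (simp add: append_vec_eq[of _ n])
qed (auto simp: J_B_mult_append_eq_smult_iff[OF x1 y1 x2 y2]
    J_B_mult_append_eq_smult_iff[OF x2 y2 x1 y1])

lemma J_B_carrier: "J_mat n * B_mat n P Q R l \<in> carrier_mat (n + n) (n + n)"
  by (rule mult_carrier_mat[OF _ B_mat_carrier]) (simp add: J_mat_def)

lemma eigenvalue_J_B_imaginary_imp_pencil_eigenvector:
  assumes "eigenvalue (map_mat complex_of_real (J_mat n * B_mat n P Q R l)) (Complex 0 \<omega>)"
  obtains z where "z \<in> carrier_vec (n + n)" "z \<noteq> 0\<^sub>v (n + n)"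
    "quad_pencil (diag_block n P) (diag_block n R) (skew_block n Q) \<omega> *\<^sub>v z = (- l) \<cdot>\<^sub>v z"
proof -
  let ?T = "J_mat n * B_mat n P Q R l"
  from assms obtain u w where u: "u \<in> carrier_vec (n + n)" and w: "w \<in> carrier_vec (n + n)"
    and nz: "u \<noteq> 0\<^sub>v (n + n) \<or> w \<noteq> 0\<^sub>v (n + n)"
    and eqs: "?T *\<^sub>v u = (- \<omega>) \<cdot>\<^sub>v w \<and> ?T *\<^sub>v w = \<omega> \<cdot>\<^sub>v u"
    unfolding eigenvalue_of_real_imaginary_iff[OF J_B_carrier] by blast
  define x1 y1 x2 y2 where "x1 = vec_first u n" and "y1 = vec_last u n"
    and "x2 = vec_first w n" and "y2 = vec_last w n"
  have c: "x1 \<in> carrier_vec n" "y1 \<in> carrier_vec n" "x2 \<in> carrier_vec n" "y2 \<in> carrier_vec n"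
    by (simp_all add: x1_def y1_def x2_def y2_def)
  have uw: "u = x1 @\<^sub>v y1" "w = x2 @\<^sub>v y2"
    using u w by (simp_all add: x1_def y1_def x2_def y2_def)
  have x: "x1 = Q *\<^sub>v y1 + (- \<omega>) \<cdot>\<^sub>v (P *\<^sub>v y2)" "x2 = Q *\<^sub>v y2 + \<omega> \<cdot>\<^sub>v (P *\<^sub>v y1)"
    and N: "quad_pencil (diag_block n P) (diag_block n R) (skew_block n Q) \<omega> *\<^sub>v (y1 @\<^sub>v y2)
      = (- l) \<cdot>\<^sub>v (y1 @\<^sub>v y2)"
    using J_B_imaginary_pair_iff[OF c, THEN iffD1, OF eqs[unfolded uw]] by blast+
  have "y1 @\<^sub>v y2 \<noteq> 0\<^sub>v (n + n)"
  proof
    assume "y1 @\<^sub>v y2 = 0\<^sub>v (n + n)"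
    then have y0: "y1 = 0\<^sub>v n" "y2 = 0\<^sub>v n"
      unfolding append_vec_eq_0_iff[OF c(2,4)] by auto
    have "x1 = 0\<^sub>v n" "x2 = 0\<^sub>v n"
      unfolding x y0 using P Q by (auto simp: vec_eq_iff)
    with y0 nz show False
      unfolding uw by (simp add: zero_append_vec_zero)
  qed
  with N c show thesis
    using that append_carrier_vec[OF c(2,4)] by blast
qed

lemma pencil_eigenvector_imp_eigenvalue_J_B_imaginary:
  assumes z: "z \<in> carrier_vec (n + n)" "z \<noteq> 0\<^sub>v (n + n)"
    and N: "quad_pencil (diag_block n P) (diag_block n R) (skew_block n Q) \<omega> *\<^sub>v z = (- l) \<cdot>\<^sub>v z"
  shows "eigenvalue (map_mat complex_of_real (J_mat n * B_mat n P Q R l)) (Complex 0 \<omega>)"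
proof -
  let ?T = "J_mat n * B_mat n P Q R l"
  define y1 y2 where "y1 = vec_first z n" and "y2 = vec_last z n"
  define x1 x2 where "x1 = Q *\<^sub>v y1 + (- \<omega>) \<cdot>\<^sub>v (P *\<^sub>v y2)" and "x2 = Q *\<^sub>v y2 + \<omega> \<cdot>\<^sub>v (P *\<^sub>v y1)"
  have c: "x1 \<in> carrier_vec n" "y1 \<in> carrier_vec n" "x2 \<in> carrier_vec n" "y2 \<in> carrier_vec n"
    using P Q by (simp_all add: x1_def x2_def y1_def y2_def)
  have z_split: "z = y1 @\<^sub>v y2"
    using z by (simp add: y1_def y2_def)
  have "?T *\<^sub>v (x1 @\<^sub>v y1) = (- \<omega>) \<cdot>\<^sub>v (x2 @\<^sub>v y2) \<and> ?T *\<^sub>v (x2 @\<^sub>v y2) = \<omega> \<cdot>\<^sub>v (x1 @\<^sub>v y1)"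
    using N[unfolded z_split]
    by (intro J_B_imaginary_pair_iff[OF c, THEN iffD2] conjI x1_def x2_def)
  moreover have "x1 @\<^sub>v y1 \<noteq> 0\<^sub>v (n + n) \<or> x2 @\<^sub>v y2 \<noteq> 0\<^sub>v (n + n)"
    using z c by (auto simp: z_split append_vec_eq_0_iff)
  ultimately show ?thesis
    unfolding eigenvalue_of_real_imaginary_iff[OF J_B_carrier] using c by (meson append_carrier_vec)
qed

lemma det_quad_pencil_blocks_nonzero:
  assumes "hyperbolic (J_mat n * B_mat n P Q R 0)"
  shows "det (quad_pencil (diag_block n P) (diag_block n R) (skew_block n Q) \<omega>) \<noteq> 0"
proof
  let ?N = "quad_pencil (diag_block n P) (diag_block n R) (skew_block n Q) \<omega>"
  assume "det ?N = 0"
  then obtain z where z: "z \<in> carrier_vec (n + n)" "z \<noteq> 0\<^sub>v (n + n)" "?N *\<^sub>v z = 0\<^sub>v (n + n)"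
    using det_0_iff_vec_prod_zero[OF quad_pencil_blocks_carrier[OF P Q R]] by blast
  then have "?N *\<^sub>v z = (- 0) \<cdot>\<^sub>v z"
    by (auto simp: vec_eq_iff)
  with z have "eigenvalue (map_mat complex_of_real (J_mat n * B_mat n P Q R 0)) (Complex 0 \<omega>)"
    by (intro pencil_eigenvector_imp_eigenvalue_J_B_imaginary)
  with assms show False
    by (simp add: hyperbolic_iff)
qed

end

theorem lemma2p3:
  fixes n :: nat and P Q R :: "real mat" and C1 :: real
  assumes "P \<in> carrier_mat n n" and "Q \<in> carrier_mat n n" and "R \<in> carrier_mat n n"
    and "transpose_mat P = P" and "transpose_mat R = R"
    and "C1 > 0"
    and "\<forall>v \<in> carrier_vec n. (P *\<^sub>v v) \<bullet> v \<ge> C1 * (v \<bullet> v)"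
    and "hyperbolic (J_mat n * B_mat n P Q R 0)"
  shows "\<forall>l::real. l \<ge> 0 \<longrightarrow> hyperbolic (J_mat n * B_mat n P Q R l)"
proof -
  note P = assms(1) and Q = assms(2) and R = assms(3)
  have "coercive n P"
    using assms(6,7) P by (auto simp: coercive_def comm_scalar_prod[of _ n] intro!: exI[of _ C1])
  then obtain Pi where inv: "mat_inverse P = Some Pi"
    using mat_inverse_exists[OF P coercive_imp_det_nonzero[OF P]] by blast
  let ?N = "quad_pencil (diag_block n P) (diag_block n R) (skew_block n Q)"
  have det: "det (?N \<omega>) \<noteq> 0" for \<omega>
    using det_quad_pencil_blocks_nonzero[OF P Q R inv assms(8)] .
  have psd: "pos_semidef (n + n) (?N \<omega>)" for \<omega>
    using quad_pencil_pos_semidef[OF diag_block_carrier[OF P] diag_block_carrier[OF R]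
        skew_block_carrier[OF Q] transpose_diag_block[OF P assms(4)]
        transpose_diag_block[OF R assms(5)] transpose_skew_block[OF Q]
        coercive_diag_block[OF P \<open>coercive n P\<close>] det] .
  have "\<not> eigenvalue (map_mat complex_of_real (J_mat n * B_mat n P Q R l)) (Complex 0 \<omega>)"
    if "0 \<le> l" for l \<omega>
  proof
    assume "eigenvalue (map_mat complex_of_real (J_mat n * B_mat n P Q R l)) (Complex 0 \<omega>)"
    then obtain z where "z \<in> carrier_vec (n + n)" "z \<noteq> 0\<^sub>v (n + n)" "?N \<omega> *\<^sub>v z = (- l) \<cdot>\<^sub>v z"
      by (rule eigenvalue_J_B_imaginary_imp_pencil_eigenvector[OF P Q R inv])
    with pos_semidef_nonpos_eigenvector_eq_0[OF quad_pencil_blocks_carrier[OF P Q R] psd det]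
      \<open>0 \<le> l\<close>
    show False
      by blast
  qed
  then show ?thesis
    by (simp add: hyperbolic_iff)
qed

end
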